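(* Let $\mathcal{C}$ be a periodic cylinder of $\Phi$ and $\mathcal{C}^{-1}$ its reversed cylinder. Then $\mathcal{C}$ is $\lambda^-$-stable if and only if $\mathcal{C}^{-1}$ is $\lambda^+$-stable.
   Context: Let $P$ be a simply connected polygon in $\mathbb{R}^2$ with $d$ sides, labeled $1,\dots,d$, with $\partial P$ oriented anticlockwise. The billiard map $\Phi$ acts on unit vectors $(x,v)$ with $x\in\partial P$ and $v$ pointing into $P$: $\Phi(x,v)=(\bar x,\bar v)$, where $\bar x$ is the first point at which the ray from $x$ in direction $v$ meets $\partial P$ and $\bar v$ is the inward vector obtained by reflecting $v$ in the side containing $\bar x$. Vectors based at vertices, and vectors whose image would be based at a vertex, are excluded; the remaining domain is $M'$. Points of $M'$ have coordinates $(s,\theta)$, $s$ the arc-length parameter of $x$ on $\partial P$, $\theta\in(-\pi/2,\pi/2)$ the oriented angle between $v$ and the inward normal at $x$. $\Sigma_{i,j}$ is the set of $(s,\theta)\in M'$ with $x$ on side $i$ and $\bar x$ on side $j$. For $\lambda>0$ let $R_\lambda(s,\theta)=(s,\lambda\theta)$ and $\Phi_\lambda:=R_\lambda\circ\Phi$ (pinball billiard map for $\lambda\neq1$). The itinerary of an orbit $(s_k,\theta_k)$ is the sequence $(i_k)$ with $(s_k,\theta_k)\in\Sigma_{i_k,i_{k+1}}$. Every periodic orbit of $\Phi$ lies in a periodic cylinder: a maximal one-parameter family of parallel periodic orbits of $\Phi$ with the same itinerary. Let $S(s,\theta)=(s,-\theta)$; the reversed cylinder $\mathcal{C}^{-1}$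 of $\mathcal{C}$ is the periodic cylinder obtained by applying $S$ to $\mathcal{C}$ (time reversal). A periodic orbit $q$ of $\Phi$ is $\lambda^{+}$-stable (resp. $\lambda^-$-stable) if there exist a strictly decreasing (resp. strictly increasing) sequence $\lambda_n\to1$ and, for each $n$, a periodic orbit $q_n$ of $\Phi_{\lambda_n}$ with the same itinerary as $q$ such that $q_n\to q$. A periodic cylinder is $\lambda^\pm$-stable if it contains a $\lambda^\pm$-stable periodic orbit. *)

theory Defs
  imports "HOL-Analysis.Analysis"
begin

text \<open>Polygon with vertices p 0, ..., p (d-1) in the plane (modelled as complex),
  side i is the segment from p i to p (i+1 mod d).\<close>

definition nxt :: "nat \<Rightarrow> nat \<Rightarrow> nat" where
  "nxt d i = Suc i mod d"

definition svec :: "(nat \<Rightarrow> complex) \<Rightarrow> nat \<Rightarrow> nat \<Rightarrow> complex" where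
  "svec p d i = p (nxt d i) - p i"

definition sseg :: "(nat \<Rightarrow> complex) \<Rightarrow> nat \<Rightarrow> nat \<Rightarrow> complex set" where
  "sseg p d i = closed_segment (p i) (p (nxt d i))"

definition bdry :: "(nat \<Rightarrow> complex) \<Rightarrow> nat \<Rightarrow> complex set" where
  "bdry p d = (\<Union>i<d. sseg p d i)"

text \<open>Simple closed polygonal boundary with d genuine sides (adjacent sides not collinear,
  sides meet only at shared endpoints of consecutive sides).\<close>
definition simple_polygon :: "(nat \<Rightarrow> complex) \<Rightarrow> nat \<Rightarrow> bool" where
  "simple_polygon p d \<longleftrightarrow> 3 \<le> d \<and>
     (\<forall>i<d. Im (cnj (svec p d i) * svec p d (nxt d i)) \<noteq> 0) \<and>
     (\<forall>i<d. \<forall>j<d. i \<noteq> j \<longrightarrow>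
        sseg p d i \<inter> sseg p d j \<subseteq>
          (if j = nxt d i then {p j} else {}) \<union> (if i = nxt d j then {p i} else {}))"

text \<open>Anticlockwise orientation: positive signed (shoelace) area.\<close>
definition anticlockwise :: "(nat \<Rightarrow> complex) \<Rightarrow> nat \<Rightarrow> bool" where
  "anticlockwise p d \<longleftrightarrow> (\<Sum>i<d. Im (cnj (p i) * p (nxt d i))) > 0"

definition slen :: "(nat \<Rightarrow> complex) \<Rightarrow> nat \<Rightarrow> nat \<Rightarrow> real" where
  "slen p d i = cmod (svec p d i)"

definition cum :: "(nat \<Rightarrow> complex) \<Rightarrow> nat \<Rightarrow> nat \<Rightarrow> real" where
  "cum p d k = (\<Sum>j<k. slen p d j)"

definition on_side :: "(nat \<Rightarrow> complex) \<Rightarrow> nat \<Rightarrow> nat \<Rightarrow> real \<Rightarrow> bool" where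
  "on_side p d i s \<longleftrightarrow> i < d \<and> cum p d i < s \<and> s < cum p d (Suc i)"

definition regular_s :: "(nat \<Rightarrow> complex) \<Rightarrow> nat \<Rightarrow> real \<Rightarrow> bool" where
  "regular_s p d s \<longleftrightarrow> (\<exists>i. on_side p d i s)"

definition side_of :: "(nat \<Rightarrow> complex) \<Rightarrow> nat \<Rightarrow> real \<Rightarrow> nat" where
  "side_of p d s = (THE i. on_side p d i s)"

definition tang :: "(nat \<Rightarrow> complex) \<Rightarrow> nat \<Rightarrow> nat \<Rightarrow> complex" where
  "tang p d i = svec p d i / of_real (slen p d i)"

text \<open>Inward unit normal (interior lies to the left of anticlockwise sides).\<close>
definition inormal :: "(nat \<Rightarrow> complex) \<Rightarrow> nat \<Rightarrow> nat \<Rightarrow> complex" where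
  "inormal p d i = \<i> * tang p d i"

definition pos :: "(nat \<Rightarrow> complex) \<Rightarrow> nat \<Rightarrow> real \<Rightarrow> complex" where
  "pos p d s = p (side_of p d s) + of_real (s - cum p d (side_of p d s)) * tang p d (side_of p d s)"

definition vel :: "(nat \<Rightarrow> complex) \<Rightarrow> nat \<Rightarrow> real \<Rightarrow> real \<Rightarrow> complex" where
  "vel p d s \<theta> = inormal p d (side_of p d s) * cis \<theta>"

definition first_hit :: "(nat \<Rightarrow> complex) \<Rightarrow> nat \<Rightarrow> real \<Rightarrow> real \<Rightarrow> real \<Rightarrow> bool" where
  "first_hit p d s \<theta> t \<longleftrightarrow> 0 < t \<and> pos p d s + of_real t * vel p d s \<theta> \<in> bdry p d \<and>
     (\<forall>t'. 0 < t' \<and> t' < t \<longrightarrow> pos p d s + of_real t' * vel p d s \<theta> \<notin> bdry p d)"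

definition hit_pt :: "(nat \<Rightarrow> complex) \<Rightarrow> nat \<Rightarrow> real \<Rightarrow> real \<Rightarrow> complex" where
  "hit_pt p d s \<theta> = pos p d s + of_real (THE t. first_hit p d s \<theta> t) * vel p d s \<theta>"

definition arc_of :: "(nat \<Rightarrow> complex) \<Rightarrow> nat \<Rightarrow> complex \<Rightarrow> real" where
  "arc_of p d x = (THE s. regular_s p d s \<and> pos p d s = x)"

text \<open>The domain M': base point not a vertex, inward direction, image not at a vertex.\<close>
definition Mdom :: "(nat \<Rightarrow> complex) \<Rightarrow> nat \<Rightarrow> (real \<times> real) set" where
  "Mdom p d = {(s, \<theta>). regular_s p d s \<and> - (pi/2) < \<theta> \<and> \<theta> < pi/2 \<and>
       (\<exists>t. first_hit p d s \<theta> t) \<and> hit_pt p d s \<theta> \<notin> p ` {..<d}}"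

definition bmap :: "(nat \<Rightarrow> complex) \<Rightarrow> nat \<Rightarrow> real \<times> real \<Rightarrow> real \<times> real" where
  "bmap p d = (\<lambda>(s, \<theta>).
     let s' = arc_of p d (hit_pt p d s \<theta>);
         j = side_of p d s';
         v' = (tang p d j)\<^sup>2 * cnj (vel p d s \<theta>)
     in (s', Arg (v' / inormal p d j)))"

definition Rlam :: "real \<Rightarrow> real \<times> real \<Rightarrow> real \<times> real" where
  "Rlam lam = (\<lambda>(s, \<theta>). (s, lam * \<theta>))"

definition pinball :: "(nat \<Rightarrow> complex) \<Rightarrow> nat \<Rightarrow> real \<Rightarrow> real \<times> real \<Rightarrow> real \<times> real" where
  "pinball p d lam = Rlam lam \<circ> bmap p d"

definition periodic_orbit :: "(nat \<Rightarrow> complex) \<Rightarrow> nat \<Rightarrow> (real \<times> real \<Rightarrow> real \<times> real) \<Rightarrow> real \<times> real \<Rightarrow> bool" where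
  "periodic_orbit p d f q \<longleftrightarrow> (\<forall>k. (f ^^ k) q \<in> Mdom p d) \<and> (\<exists>n>0. (f ^^ n) q = q)"

definition itinerary :: "(nat \<Rightarrow> complex) \<Rightarrow> nat \<Rightarrow> (real \<times> real \<Rightarrow> real \<times> real) \<Rightarrow> real \<times> real \<Rightarrow> nat \<Rightarrow> nat" where
  "itinerary p d f q = (\<lambda>k. side_of p d (fst ((f ^^ k) q)))"

definition lam_plus_stable :: "(nat \<Rightarrow> complex) \<Rightarrow> nat \<Rightarrow> real \<times> real \<Rightarrow> bool" where
  "lam_plus_stable p d q \<longleftrightarrow> periodic_orbit p d (bmap p d) q \<and>
     (\<exists>lam :: nat \<Rightarrow> real. \<exists>qs :: nat \<Rightarrow> real \<times> real.
        (\<forall>n. 0 < lam n) \<and> (\<forall>n. lam (Suc n) < lam n) \<and> lam \<longlonglongrightarrow> 1 \<and>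
        (\<forall>n. periodic_orbit p d (pinball p d (lam n)) (qs n) \<and>
             itinerary p d (pinball p d (lam n)) (qs n) = itinerary p d (bmap p d) q) \<and>
        qs \<longlonglongrightarrow> q)"

definition lam_minus_stable :: "(nat \<Rightarrow> complex) \<Rightarrow> nat \<Rightarrow> real \<times> real \<Rightarrow> bool" where
  "lam_minus_stable p d q \<longleftrightarrow> periodic_orbit p d (bmap p d) q \<and>
     (\<exists>lam :: nat \<Rightarrow> real. \<exists>qs :: nat \<Rightarrow> real \<times> real.
        (\<forall>n. 0 < lam n) \<and> (\<forall>n. lam n < lam (Suc n)) \<and> lam \<longlonglongrightarrow> 1 \<and>
        (\<forall>n. periodic_orbit p d (pinball p d (lam n)) (qs n) \<and>
             itinerary p d (pinball p d (lam n)) (qs n) = itinerary p d (bmap p d) q) \<and>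
        qs \<longlonglongrightarrow> q)"

definition periodic_cylinder :: "(nat \<Rightarrow> complex) \<Rightarrow> nat \<Rightarrow> (real \<times> real) set \<Rightarrow> bool" where
  "periodic_cylinder p d C \<longleftrightarrow> (\<exists>q0. periodic_orbit p d (bmap p d) q0 \<and>
     C = {q. periodic_orbit p d (bmap p d) q \<and>
             (\<exists>k. itinerary p d (bmap p d) q = (\<lambda>j. itinerary p d (bmap p d) q0 (j + k)))})"

definition Srev :: "real \<times> real \<Rightarrow> real \<times> real" where
  "Srev = (\<lambda>(s, \<theta>). (s, - \<theta>))"

definition cyl_lam_plus_stable :: "(nat \<Rightarrow> complex) \<Rightarrow> nat \<Rightarrow> (real \<times> real) set \<Rightarrow> bool" where
  "cyl_lam_plus_stable p d C \<longleftrightarrow> (\<exists>q\<in>C. lam_plus_stable p d q)"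

definition cyl_lam_minus_stable :: "(nat \<Rightarrow> complex) \<Rightarrow> nat \<Rightarrow> (real \<times> real) set \<Rightarrow> bool" where
  "cyl_lam_minus_stable p d C \<longleftrightarrow> (\<exists>q\<in>C. lam_minus_stable p d q)"

end

(* Time reversal conjugates the billiard map: for y in M', S (\<Phi> y) is again in M' and
   \<Phi> (S (\<Phi> y)) = S y.  Since R\<^sub>\<lambda> commutes with S, an N-periodic orbit of \<Phi>\<^sub>\<lambda>, read backwards
   through S and rescaled by R\<^bsub>1/\<lambda>\<^esub>, is an N-periodic orbit of \<Phi>\<^bsub>1/\<lambda>\<^esub> with the reversed
   itinerary, and \<lambda>\<^sub>n increases to 1 iff 1/\<lambda>\<^sub>n decreases to 1.
   The geometric input is that the reflected direction points strictly into the polygon: a chord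
   leaving a side towards its left reaches the side it hits from the left as well, because the
   winding number of the boundary is constant along the chord but drops by one across every side. *)

theory Submission
  imports Defs "HOL-Complex_Analysis.Winding_Numbers"
begin

section \<open>Sides and the arc-length parametrisation\<close>

definition open_side :: "(nat \<Rightarrow> complex) \<Rightarrow> nat \<Rightarrow> nat \<Rightarrow> complex set" where
  "open_side p d i = open_segment (p i) (p (nxt d i))"

lemma simple_polygon_ge3: "simple_polygon p d \<Longrightarrow> 3 \<le> d"
  by (simp add: simple_polygon_def)

lemma nxt_less: "0 < d \<Longrightarrow> nxt d i < d"
  by (simp add: nxt_def)

lemma svec_nonzero:
  assumes "simple_polygon p d" "i < d"
  shows "svec p d i \<noteq> 0"
  using assms unfolding simple_polygon_def by force

lemma slen_pos: "simple_polygon p d \<Longrightarrow> i < d \<Longrightarrow> 0 < slen p d i"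
  using svec_nonzero by (simp add: slen_def)

lemma vertex_neq_next: "simple_polygon p d \<Longrightarrow> i < d \<Longrightarrow> p i \<noteq> p (nxt d i)"
  using svec_nonzero[of p d i] by (auto simp: svec_def)

lemma norm_tang: "simple_polygon p d \<Longrightarrow> i < d \<Longrightarrow> cmod (tang p d i) = 1"
  using svec_nonzero[of p d i] by (simp add: tang_def slen_def norm_divide)

lemma svec_eq_slen_tang:
  "simple_polygon p d \<Longrightarrow> i < d \<Longrightarrow> svec p d i = of_real (slen p d i) * tang p d i"
  using slen_pos[of p d i] by (simp add: tang_def)

lemma side_inter_subset:
  assumes "simple_polygon p d" "i < d" "j < d" "i \<noteq> j"
  shows "sseg p d i \<inter> sseg p d j \<subseteq>
           (if j = nxt d i then {p j} else {}) \<union> (if i = nxt d j then {p i} else {})"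
  using assms unfolding simple_polygon_def by blast

lemma cum_Suc: "cum p d (Suc i) = cum p d i + slen p d i"
  by (simp add: cum_def)

lemma cum_mono:
  assumes "simple_polygon p d" "i \<le> k" "k \<le> d"
  shows "cum p d i \<le> cum p d k"
  unfolding cum_def
  using assms slen_pos by (intro sum_mono2) (auto simp: less_imp_le)

lemma on_side_unique:
  assumes "simple_polygon p d" "on_side p d i s" "on_side p d k s"
  shows "i = k"
proof (rule ccontr)
  assume "i \<noteq> k"
  then consider "Suc i \<le> k" | "Suc k \<le> i" by linarith
  then show False
    using cum_mono[OF assms(1), of "Suc i" k] cum_mono[OF assms(1), of "Suc k" i] assms(2,3)
    by cases (auto simp: on_side_def)
qed

lemma side_of_eqI: "simple_polygon p d \<Longrightarrow> on_side p d i s \<Longrightarrow> side_of p d s = i"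
  unfolding side_of_def using on_side_unique by blast

lemma on_side_side_of:
  assumes "simple_polygon p d" "regular_s p d s"
  shows "on_side p d (side_of p d s) s"
  using assms side_of_eqI unfolding regular_s_def by metis

lemma pos_on_side:
  assumes sp: "simple_polygon p d" and os: "on_side p d i s"
  shows "pos p d s = p i + of_real (s - cum p d i) * tang p d i"
    and "pos p d s \<in> open_side p d i"
proof -
  show ps: "pos p d s = p i + of_real (s - cum p d i) * tang p d i"
    by (simp add: pos_def side_of_eqI[OF sp os])
  have il: "i < d" using os by (simp add: on_side_def)
  have L: "0 < slen p d i" using slen_pos[OF sp il] .
  define u where "u = (s - cum p d i) / slen p d i"
  have u: "0 < u" "u < 1" using os L by (auto simp: u_def on_side_def cum_Suc field_simps)
  have "pos p d s = (1 - u) *\<^sub>R p i + u *\<^sub>R p (nxt d i)"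
    using L unfolding ps u_def tang_def svec_def scaleR_conv_of_real
    by (simp add: field_simps)
  then show "pos p d s \<in> open_side p d i"
    unfolding open_side_def in_segment using u vertex_neq_next[OF sp il] by blast
qed

lemma open_side_subset_sseg: "open_side p d i \<subseteq> sseg p d i"
  by (simp add: open_side_def sseg_def open_closed_segment subsetI)

lemma open_side_subset_bdry: "i < d \<Longrightarrow> open_side p d i \<subseteq> bdry p d"
  using open_side_subset_sseg by (fastforce simp: bdry_def)

lemma on_side_of_open_side:
  assumes sp: "simple_polygon p d" and il: "i < d" and x: "x \<in> open_side p d i"
  shows "on_side p d i (cum p d i + cmod (x - p i))"
    and "pos p d (cum p d i + cmod (x - p i)) = x"
proof -
  obtain u where u: "0 < u" "u < 1" and xu: "x = (1 - u) *\<^sub>R p i + u *\<^sub>R p (nxt d i)"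
    using x unfolding open_side_def in_segment by blast
  have L: "0 < slen p d i" using slen_pos[OF sp il] .
  have xe: "x - p i = of_real u * svec p d i"
    by (simp add: xu svec_def scaleR_conv_of_real algebra_simps)
  have nx: "cmod (x - p i) = u * slen p d i"
    using u by (simp add: xe norm_mult slen_def)
  show os: "on_side p d i (cum p d i + cmod (x - p i))"
    using u L il by (simp add: on_side_def nx cum_Suc)
  have "pos p d (cum p d i + cmod (x - p i)) = p i + of_real (u * slen p d i) * tang p d i"
    using pos_on_side(1)[OF sp os] nx by simp
  also have "\<dots> = x" using L by (simp add: tang_def flip: xe)
  finally show "pos p d (cum p d i + cmod (x - p i)) = x" .
qed

lemma open_side_disjoint:
  assumes "simple_polygon p d" "i < d" "k < d" "i \<noteq> k"
  shows "open_side p d i \<inter> sseg p d k = {}"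
proof -
  have "sseg p d i \<inter> sseg p d k \<subseteq> {p i, p (nxt d i)}"
    using side_inter_subset[OF assms] by (auto split: if_splits)
  moreover have "open_side p d i \<subseteq> sseg p d i - {p i, p (nxt d i)}"
    unfolding open_side_def sseg_def open_segment_def by auto
  ultimately show ?thesis by blast
qed

lemma vertex_notin_open_side:
  assumes "simple_polygon p d" "i < d" "k < d"
  shows "p k \<notin> open_side p d i"
proof (cases "k = i")
  case False
  then show ?thesis using open_side_disjoint[OF assms] by (auto simp: sseg_def)
qed (simp add: open_side_def open_segment_def)

lemma pos_inj:
  assumes sp: "simple_polygon p d" and "on_side p d i s" "on_side p d k s'"
    and eq: "pos p d s = pos p d s'"
  shows "s = s'"
proof -
  have il: "i < d" "k < d" using assms by (auto simp: on_side_def)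
  have "pos p d s \<in> open_side p d i" "pos p d s \<in> sseg p d k"
    using pos_on_side(2)[OF sp assms(2)] pos_on_side(2)[OF sp assms(3)] eq open_side_subset_sseg
    by auto
  then have "i = k" using open_side_disjoint[OF sp il] by blast
  then have "of_real (s - cum p d i) * tang p d i = of_real (s' - cum p d i) * tang p d i"
    using pos_on_side(1)[OF sp] assms by (metis add_left_cancel)
  moreover have "tang p d i \<noteq> 0" using norm_tang[OF sp il(1)] by auto
  ultimately show ?thesis by simp
qed

lemma arc_of_pos:
  assumes "simple_polygon p d" "on_side p d i s"
  shows "arc_of p d (pos p d s) = s"
  unfolding arc_of_def
proof (rule the_equality)
  show "regular_s p d s \<and> pos p d s = pos p d s" using assms(2) by (auto simp: regular_s_def)
  fix s' assume "regular_s p d s' \<and> pos p d s' = pos p d s"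
  then show "s' = s" using pos_inj[OF assms(1) _ assms(2)] by (auto simp: regular_s_def)
qed

lemma arc_of_open_side:
  assumes sp: "simple_polygon p d" and il: "i < d" and x: "x \<in> open_side p d i"
  shows "on_side p d i (arc_of p d x)" "pos p d (arc_of p d x) = x"
    "side_of p d (arc_of p d x) = i"
proof -
  let ?s = "cum p d i + cmod (x - p i)"
  have s: "on_side p d i ?s" "pos p d ?s = x" using on_side_of_open_side[OF assms] by auto
  have "arc_of p d x = ?s" using arc_of_pos[OF sp s(1)] s(2) by simp
  then show "on_side p d i (arc_of p d x)" "pos p d (arc_of p d x) = x"
    "side_of p d (arc_of p d x) = i"
    using s side_of_eqI[OF sp] by auto
qed

lemma bdry_nonvertex_in_open_side:
  assumes sp: "simple_polygon p d" and "x \<in> bdry p d" "x \<notin> p ` {..<d}"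
  obtains j where "j < d" "x \<in> open_side p d j"
proof -
  obtain j where j: "j < d" "x \<in> sseg p d j" using assms(2) by (auto simp: bdry_def)
  have "nxt d j < d" using nxt_less simple_polygon_ge3[OF sp] by simp
  then have "x \<noteq> p j" "x \<noteq> p (nxt d j)" using assms(3) j by auto
  then show ?thesis using that j unfolding open_side_def sseg_def open_segment_def by blast
qed

lemma first_hit_unique:
  assumes "first_hit p d s \<theta> t1" "first_hit p d s \<theta> t2"
  shows "t1 = t2"
  using assms unfolding first_hit_def by (metis linorder_neqE_linordered_idom)

lemma hit_pt_eq:
  assumes "first_hit p d s \<theta> t"
  shows "hit_pt p d s \<theta> = pos p d s + of_real t * vel p d s \<theta>"
proof -
  have "(THE t. first_hit p d s \<theta> t) = t"
    using assms first_hit_unique by blast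
  then show ?thesis by (simp add: hit_pt_def)
qed

text \<open>For a unit tangent \<open>t\<close>, \<open>t\<^sup>2 * cnj v\<close> is the mirror image of \<open>v\<close> in the line \<open>\<real> t\<close>;
  \<open>bmap\<close> takes its angle relative to the normal \<open>\<i> * t\<close>.\<close>
lemma reflection_quotient: "t \<noteq> 0 \<Longrightarrow> t\<^sup>2 * cnj v / (\<i> * t) = - \<i> * t * cnj v"
  by (simp add: power2_eq_square field_simps)

lemma unit_mult_cnj: "cmod t = 1 \<Longrightarrow> t * cnj t = 1"
  by (metis complex_norm_square mult.commute of_real_1 power_one)

lemma reflection_twice:
  assumes "cmod t = 1"
  shows "(\<i> * t) * cnj (t\<^sup>2 * cnj v / (\<i> * t)) = - v"
proof -
  have t0: "t \<noteq> 0" using assms by auto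
  have "(\<i> * t) * cnj (t\<^sup>2 * cnj v / (\<i> * t)) = \<i> * \<i> * (t * cnj t) * v"
    unfolding reflection_quotient[OF t0] by (simp add: algebra_simps)
  then show ?thesis by (simp add: unit_mult_cnj[OF assms])
qed

lemma norm_reflection: "cmod t = 1 \<Longrightarrow> cmod (t\<^sup>2 * cnj v / (\<i> * t)) = cmod v"
  by (simp add: norm_mult norm_divide norm_power)

lemma Re_reflection:
  assumes "cmod t = 1"
  shows "Re (t\<^sup>2 * cnj v / (\<i> * t)) = - Im (cnj t * v)"
proof -
  have "t \<noteq> 0" using assms by auto
  then show ?thesis by (simp add: reflection_quotient)
qed

lemma Arg_reflection_reverse:
  assumes "cmod t = 1" "-(pi/2) < \<theta>" "\<theta> < pi/2"
  shows "Arg (t\<^sup>2 * cnj (- ((\<i> * t) * cis \<theta>)) / (\<i> * t)) = - \<theta>"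
proof -
  have t0: "t \<noteq> 0" using assms by auto
  have "t\<^sup>2 * cnj (- ((\<i> * t) * cis \<theta>)) / (\<i> * t) = (t * cnj t) * cis (- \<theta>)"
    unfolding reflection_quotient[OF t0] by (simp add: cis_cnj[symmetric] algebra_simps)
  then show ?thesis using assms by (simp add: unit_mult_cnj Arg_cis)
qed

lemma cis_minus_Arg:
  assumes "cmod w = 1"
  shows "cis (- Arg w) = cnj w"
proof -
  have "w \<noteq> 0" using assms by auto
  then have "cis (Arg w) = w" using cis_Arg[of w] assms by (simp add: sgn_div_norm)
  then show ?thesis by (metis cis_cnj)
qed

lemma Mdom_elim:
  assumes sp: "simple_polygon p d" and y: "(s, \<theta>) \<in> Mdom p d"
  obtains i j t where "i < d" "on_side p d i s" "side_of p d s = i"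
    "-(pi/2) < \<theta>" "\<theta> < pi/2" "first_hit p d s \<theta> t" "j < d"
    "pos p d s + of_real t * vel p d s \<theta> \<in> open_side p d j"
    "on_side p d j (fst (bmap p d (s, \<theta>)))"
    "side_of p d (fst (bmap p d (s, \<theta>))) = j"
    "pos p d (fst (bmap p d (s, \<theta>))) = pos p d s + of_real t * vel p d s \<theta>"
    "snd (bmap p d (s, \<theta>)) = Arg ((tang p d j)\<^sup>2 * cnj (vel p d s \<theta>) / inormal p d j)"
    "vel p d s \<theta> = inormal p d i * cis \<theta>"
proof -
  have reg: "regular_s p d s" and th: "-(pi/2) < \<theta>" "\<theta> < pi/2"
    and fh: "\<exists>t. first_hit p d s \<theta> t" and nv: "hit_pt p d s \<theta> \<notin> p ` {..<d}"
    using y by (auto simp: Mdom_def)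
  define i where "i = side_of p d s"
  have osi: "on_side p d i s" using on_side_side_of[OF sp reg] by (simp add: i_def)
  obtain t where t: "first_hit p d s \<theta> t" using fh by blast
  have hp: "hit_pt p d s \<theta> = pos p d s + of_real t * vel p d s \<theta>" using hit_pt_eq[OF t] .
  have "hit_pt p d s \<theta> \<in> bdry p d" using t hp by (simp add: first_hit_def)
  then obtain j where j: "j < d" "hit_pt p d s \<theta> \<in> open_side p d j"
    using bdry_nonvertex_in_open_side[OF sp _ nv] by blast
  note arc = arc_of_open_side[OF sp j]
  have "bmap p d (s, \<theta>) = (arc_of p d (hit_pt p d s \<theta>),
          Arg ((tang p d j)\<^sup>2 * cnj (vel p d s \<theta>) / inormal p d j))"
    using arc(3) by (simp add: bmap_def Let_def)
  then show ?thesis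
    by (intro that[of i t j]) (use osi th t j arc hp in \<open>simp_all add: i_def vel_def on_side_def\<close>)
qed

section \<open>The boundary as a simple closed path\<close>

definition side_path :: "(nat \<Rightarrow> complex) \<Rightarrow> nat \<Rightarrow> nat \<Rightarrow> real \<Rightarrow> complex" where
  "side_path p d k = linepath (p k) (p (nxt d k))"

primrec sides_path :: "(nat \<Rightarrow> complex) \<Rightarrow> nat \<Rightarrow> nat \<Rightarrow> nat \<Rightarrow> real \<Rightarrow> complex" where
  "sides_path p d k 0 = side_path p d k"
| "sides_path p d k (Suc n) = side_path p d k +++ sides_path p d (Suc k) n"

definition boundary_path :: "(nat \<Rightarrow> complex) \<Rightarrow> nat \<Rightarrow> real \<Rightarrow> complex" where
  "boundary_path p d = sides_path p d 0 (d - 1)"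

lemma nxt_Suc: "Suc k < d \<Longrightarrow> nxt d k = Suc k"
  by (simp add: nxt_def)

lemma path_image_side_path: "path_image (side_path p d k) = sseg p d k"
  by (simp add: side_path_def sseg_def)

lemma sides_path_basic:
  assumes "k + n < d"
  shows "path (sides_path p d k n) \<and> pathstart (sides_path p d k n) = p k \<and>
         pathfinish (sides_path p d k n) = p (nxt d (k + n)) \<and>
         path_image (sides_path p d k n) = (\<Union>j\<in>{k..k+n}. sseg p d j)"
  using assms
proof (induction n arbitrary: k)
  case 0
  then show ?case by (simp add: side_path_def sseg_def)
next
  case (Suc n)
  have IH: "path (sides_path p d (Suc k) n) \<and> pathstart (sides_path p d (Suc k) n) = p (Suc k) \<and>
         pathfinish (sides_path p d (Suc k) n) = p (nxt d (Suc k + n)) \<and>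
         path_image (sides_path p d (Suc k) n) = (\<Union>j\<in>{Suc k..Suc k+n}. sseg p d j)"
    using Suc by simp
  have "{k..k + Suc n} = insert k {Suc k..Suc k + n}" by auto
  then show ?case
    using IH Suc.prems by (simp add: side_path_def sseg_def path_image_join nxt_Suc)
qed

lemma winding_number_sides_path:
  assumes "k + n < d" "z \<notin> path_image (sides_path p d k n)"
  shows "winding_number (sides_path p d k n) z = (\<Sum>j\<in>{k..k+n}. winding_number (side_path p d j) z)"
  using assms
proof (induction n arbitrary: k)
  case (Suc n)
  have "Suc k + n < d" using Suc.prems by simp
  note B = sides_path_basic[OF this, of p]
  have joins: "pathfinish (side_path p d k) = pathstart (sides_path p d (Suc k) n)"
    using B Suc.prems by (simp add: side_path_def nxt_Suc)
  have z: "z \<notin> path_image (side_path p d k)" "z \<notin> path_image (sides_path p d (Suc k) n)"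
    using Suc.prems joins B by (auto simp: path_image_join)
  have "{k..k + Suc n} = insert k {Suc k..Suc k + n}" by auto
  then show ?case
    using winding_number_join[of "side_path p d k" z "sides_path p d (Suc k) n"] z B joins
      Suc.IH[of "Suc k"] Suc.prems
    by (simp add: side_path_def)
qed simp

lemma sides_inter_after:
  assumes sp: "simple_polygon p d" and "1 \<le> k" "k + Suc n < d" "j \<in> {Suc k..Suc k + n}"
  shows "sseg p d k \<inter> sseg p d j \<subseteq> {p (Suc k)}"
proof -
  have "j < d" using assms(3,4) by auto
  then have "nxt d j = Suc j \<or> nxt d j = 0"
    by (metis Suc_lessI mod_less mod_self nxt_def)
  then have "k \<noteq> nxt d j"
    using assms(2,4) by auto
  then show ?thesis
    using side_inter_subset[OF sp, of k j] assms(3,4) by (auto simp: nxt_Suc split: if_splits)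
qed

text \<open>Starting at \<open>k \<ge> 1\<close> excludes side \<open>0\<close>, which shares the vertex \<open>p 0\<close> with side \<open>d - 1\<close>.\<close>
lemma arc_sides_path:
  assumes sp: "simple_polygon p d" and "1 \<le> k" "k + n < d"
  shows "arc (sides_path p d k n)"
  using assms(2,3)
proof (induction n arbitrary: k)
  case 0
  then show ?case using vertex_neq_next[OF sp, of k] by (simp add: side_path_def)
next
  case (Suc n)
  have "Suc k + n < d" using Suc.prems by simp
  note B = sides_path_basic[OF this, of p]
  have joins: "pathfinish (side_path p d k) = pathstart (sides_path p d (Suc k) n)"
    using B Suc.prems by (simp add: side_path_def nxt_Suc)
  have "arc (side_path p d k)"
    using vertex_neq_next[OF sp, of k] Suc.prems by (simp add: side_path_def)
  moreover have "arc (sides_path p d (Suc k) n)" using Suc.IH[of "Suc k"] Suc.prems by simp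
  moreover have "path_image (side_path p d k) \<inter> path_image (sides_path p d (Suc k) n)
      \<subseteq> {pathstart (sides_path p d (Suc k) n)}"
    using B sides_inter_after[OF sp Suc.prems]
    by (auto simp: path_image_side_path simp del: atLeastAtMost_iff)
  ultimately show ?case using arc_join joins by simp
qed

lemma simple_closed_boundary_path:
  assumes sp: "simple_polygon p d"
  shows "simple_path (boundary_path p d)"
    and "pathfinish (boundary_path p d) = pathstart (boundary_path p d)"
    and "path_image (boundary_path p d) = bdry p d"
proof -
  have d3: "3 \<le> d" using simple_polygon_ge3[OF sp] .
  have iv: "{0..0 + (d - 1)} = {..<d}" using d3 by auto
  have "0 + (d - 1) < d" using d3 by simp
  note B = sides_path_basic[OF this, of p]
  show "pathfinish (boundary_path p d) = pathstart (boundary_path p d)"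
    using B d3 by (simp add: boundary_path_def nxt_def)
  show "path_image (boundary_path p d) = bdry p d"
    using B iv d3 by (simp add: boundary_path_def bdry_def)
  have dd: "d - 1 = Suc (d - 2)" using d3 by simp
  have split: "boundary_path p d = side_path p d 0 +++ sides_path p d 1 (d - 2)"
    unfolding boundary_path_def dd by simp
  have "1 + (d - 2) < d" using d3 by simp
  note C = sides_path_basic[OF this, of p]
  have "Suc (Suc (d - 2)) = d" using d3 by simp
  then have n0: "nxt d 0 = 1" "nxt d (1 + (d - 2)) = 0" using d3 by (simp_all add: nxt_def)
  have "sseg p d 0 \<inter> sseg p d j \<subseteq> {p 0, p 1}" if "j \<in> {1..1 + (d - 2)}" for j
  proof -
    have "j < d" "j \<noteq> 0" using that d3 by auto
    then show ?thesis using side_inter_subset[OF sp, of 0 j] d3 n0 by (auto split: if_splits)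
  qed
  then have "sseg p d 0 \<inter> (\<Union>j\<in>{1..1 + (d - 2)}. sseg p d j) \<subseteq> {p 0, p 1}"
    by blast
  then have "path_image (side_path p d 0) \<inter> path_image (sides_path p d 1 (d - 2))
      \<subseteq> {pathstart (side_path p d 0), pathstart (sides_path p d 1 (d - 2))}"
    unfolding path_image_side_path using C by (simp add: side_path_def)
  moreover have "arc (side_path p d 0)"
    using vertex_neq_next[OF sp, of 0] d3 by (simp add: side_path_def)
  moreover have "arc (sides_path p d 1 (d - 2))" using arc_sides_path[OF sp, of 1 "d - 2"] d3 by simp
  ultimately show "simple_path (boundary_path p d)"
    unfolding split using C n0 by (intro simple_path_join_loop) (simp_all add: side_path_def)
qed

lemma winding_number_boundary_path:
  assumes "simple_polygon p d" "z \<notin> bdry p d"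
  shows "winding_number (boundary_path p d) z = (\<Sum>j<d. winding_number (side_path p d j) z)"
proof -
  have "{0..0 + (d - 1)} = {..<d}" using simple_polygon_ge3[OF assms(1)] by auto
  then show ?thesis
    using winding_number_sides_path[of 0 "d - 1" d z p] assms simple_closed_boundary_path(3)[OF assms(1)]
      simple_polygon_ge3[OF assms(1)]
    by (simp add: boundary_path_def)
qed

section \<open>Winding numbers near a side\<close>

text \<open>Positive exactly to the left of side \<open>i\<close>, oriented from \<open>p i\<close> to \<open>p (nxt d i)\<close>.\<close>
definition side_cross :: "(nat \<Rightarrow> complex) \<Rightarrow> nat \<Rightarrow> nat \<Rightarrow> complex \<Rightarrow> real" where
  "side_cross p d i z = Im (cnj (svec p d i) * (z - p i))"

lemma Im_cnj_mult_of_real: "Im (cnj e * (of_real c * v)) = c * Im (cnj e * v)"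
  by (simp add: algebra_simps)

lemma side_cross_add: "side_cross p d i (z + w) = side_cross p d i z + Im (cnj (svec p d i) * w)"
  by (simp add: side_cross_def algebra_simps)

lemma side_cross_sseg:
  assumes "z \<in> sseg p d i"
  shows "side_cross p d i z = 0"
proof -
  obtain u where "z = (1 - u) *\<^sub>R p i + u *\<^sub>R p (nxt d i)"
    using assms unfolding sseg_def in_segment by blast
  then have "z - p i = of_real u * svec p d i"
    by (simp add: svec_def scaleR_conv_of_real algebra_simps)
  then show ?thesis by (simp add: side_cross_def)
qed

lemma side_cross_normal_shift:
  assumes "side_cross p d i y = 0"
  shows "side_cross p d i (y + of_real c * (\<i> * svec p d i)) = c * (cmod (svec p d i))\<^sup>2"
    and "dist (y + of_real c * (\<i> * svec p d i)) y = \<bar>c\<bar> * cmod (svec p d i)"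
  using assms unfolding side_cross_add cmod_power2
  by (simp_all add: dist_norm norm_mult algebra_simps power2_eq_square)

lemma convex_side_cross_pos: "convex {z. side_cross p d i z > 0}"
  and convex_side_cross_neg: "convex {z. side_cross p d i z < 0}"
proof -
  have eq: "side_cross p d i z = inner (\<i> * svec p d i) z - inner (\<i> * svec p d i) (p i)" for z
    by (simp add: side_cross_def inner_complex_def algebra_simps)
  show "convex {z. side_cross p d i z > 0}" "convex {z. side_cross p d i z < 0}"
    unfolding eq using convex_halfspace_gt convex_halfspace_lt by simp_all
qed

lemma Re_winding_number_side_path_left:
  "side_cross p d i z > 0 \<Longrightarrow> 0 < Re (winding_number (side_path p d i) z)"
  unfolding side_path_def
  by (rule winding_number_linepath_pos_lt) (simp add: side_cross_def svec_def algebra_simps)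

lemma Re_winding_number_side_path_right:
  "side_cross p d i z < 0 \<Longrightarrow> Re (winding_number (side_path p d i) z) < 0"
  unfolding side_path_def
  by (rule winding_number_linepath_neg_lt) (simp add: side_cross_def svec_def algebra_simps)

lemma open_side_isolated:
  assumes sp: "simple_polygon p d" and il: "i < d" and y: "y \<in> open_side p d i"
  obtains r where "0 < r" "\<And>z k. z \<in> ball y r \<Longrightarrow> k < d \<Longrightarrow> k \<noteq> i \<Longrightarrow> z \<notin> sseg p d k"
proof -
  define U where "U = (\<Union>k\<in>{k. k < d \<and> k \<noteq> i}. sseg p d k)"
  have "closed U" unfolding U_def sseg_def by (intro closed_UN) auto
  moreover have "y \<notin> U" using open_side_disjoint[OF sp il] y unfolding U_def by blast
  ultimately obtain r where "0 < r" "ball y r \<subseteq> - U"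
    using open_contains_ball_eq[of "- U" y] by (auto simp: open_Compl)
  then show ?thesis using that unfolding U_def by blast
qed

lemma off_side_notin_bdry:
  assumes "\<And>k. k < d \<Longrightarrow> k \<noteq> i \<Longrightarrow> z \<notin> sseg p d k" "side_cross p d i z \<noteq> 0"
  shows "z \<notin> bdry p d"
  using assms side_cross_sseg unfolding bdry_def by blast

lemma open_frontier_bdry_meets_off_side:
  assumes sp: "simple_polygon p d" and il: "i < d" and y: "y \<in> open_side p d i" and "0 < r"
    and S: "open S" "frontier S = bdry p d"
  obtains z where "z \<in> S" "z \<in> ball y r" "side_cross p d i z \<noteq> 0"
proof -
  have "y \<in> frontier S" using S(2) open_side_subset_bdry[OF il] y by blast
  then obtain z1 where z1: "z1 \<in> S" "dist y z1 < r" using \<open>0 < r\<close> frontier_straddle[of y S] by blast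
  obtain \<rho> where \<rho>: "0 < \<rho>" "ball z1 \<rho> \<subseteq> S \<inter> ball y r"
    using open_contains_ball_eq[of "S \<inter> ball y r" z1] S(1) z1 by auto
  show ?thesis
  proof (cases "side_cross p d i z1 = 0")
    case True
    have e: "svec p d i \<noteq> 0" using svec_nonzero[OF sp il] .
    define c where "c = \<rho> / (2 * cmod (svec p d i))"
    let ?z = "z1 + of_real c * (\<i> * svec p d i)"
    have "0 < c" using e \<rho> by (simp add: c_def)
    then have "?z \<in> ball z1 \<rho>" "side_cross p d i ?z \<noteq> 0"
      using side_cross_normal_shift[OF True, of c] e \<rho> by (simp_all add: c_def dist_commute)
    then show ?thesis using that \<rho> by blast
  qed (use that z1 in auto)
qed

lemma winding_number_jump_across_side:
  assumes sp: "simple_polygon p d" and il: "i < d" and y: "y \<in> open_side p d i" and r: "0 < r"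
    and away: "\<And>z k. z \<in> ball y r \<Longrightarrow> k < d \<Longrightarrow> k \<noteq> i \<Longrightarrow> z \<notin> sseg p d k"
  obtains zL zR where "zL \<in> ball y r" "side_cross p d i zL > 0"
    "zR \<in> ball y r" "side_cross p d i zR < 0"
    "Re (winding_number (boundary_path p d) zL) - Re (winding_number (boundary_path p d) zR) > -1"
proof -
  define W where "W = winding_number (boundary_path p d)"
  define g where "g z = (\<Sum>k\<in>{..<d} - {i}. winding_number (side_path p d k) z)" for z
  have "continuous (at y) g" unfolding g_def
  proof (intro continuous_sum ballI)
    fix k assume k: "k \<in> {..<d} - {i}"
    have "y \<notin> path_image (side_path p d k)" using away[of y k] r k by (simp add: path_image_side_path)
    then show "continuous (at y) (winding_number (side_path p d k))"
      by (intro continuous_at_winding_number) (simp_all add: side_path_def)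
  qed
  then obtain \<delta> where \<delta>: "0 < \<delta>" "\<And>z. dist z y < \<delta> \<Longrightarrow> dist (g z) (g y) < 1/2"
    unfolding continuous_at_eps_delta by (meson zero_less_divide_1_iff zero_less_numeral)
  \<comment> \<open>near \<open>y\<close>, only side \<open>i\<close> contributes a discontinuous term to \<open>W\<close>\<close>
  have W: "W z = winding_number (side_path p d i) z + g z"
    if "z \<in> ball y r" "side_cross p d i z \<noteq> 0" for z
  proof -
    have "z \<notin> bdry p d" using off_side_notin_bdry[of d i z] away that by blast
    then show ?thesis
      using winding_number_boundary_path[OF sp] il by (simp add: W_def g_def sum.remove)
  qed
  define e where "e = svec p d i"
  have ne: "0 < cmod e" using svec_nonzero[OF sp il] by (simp add: e_def)
  define \<epsilon> where "\<epsilon> = min r \<delta> / (2 * cmod e)"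
  have \<epsilon>: "0 < \<epsilon>" "\<epsilon> * cmod e < min r \<delta>" using r \<delta> ne by (simp_all add: \<epsilon>_def min_def)
  have fy: "side_cross p d i y = 0"
    using side_cross_sseg open_side_subset_sseg y by blast
  define zL where "zL = y + of_real \<epsilon> * (\<i> * e)"
  define zR where "zR = y + of_real (- \<epsilon>) * (\<i> * e)"
  have zL: "zL \<in> ball y r" "dist zL y < \<delta>" "side_cross p d i zL > 0"
    using side_cross_normal_shift[OF fy, of \<epsilon>] \<epsilon> ne by (auto simp: zL_def e_def dist_commute)
  have zR: "zR \<in> ball y r" "dist zR y < \<delta>" "side_cross p d i zR < 0"
    using side_cross_normal_shift[OF fy, of "- \<epsilon>"] \<epsilon> ne
    by (auto simp: zR_def e_def dist_commute mult_pos_pos)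
  have g: "\<bar>Re (g z) - Re (g y)\<bar> < 1/2" if "dist z y < \<delta>" for z
    using \<delta>(2)[OF that] abs_Re_le_cmod[of "g z - g y"] by (simp add: dist_norm)
  have "Re (g zL) - Re (g zR) > -1" using g[OF zL(2)] g[OF zR(2)] by linarith
  moreover have "0 < Re (winding_number (side_path p d i) zL)"
    using Re_winding_number_side_path_left zL(3) .
  moreover have "Re (winding_number (side_path p d i) zR) < 0"
    using Re_winding_number_side_path_right zR(3) .
  ultimately show ?thesis
    using that[OF zL(1,3) zR(1,3)] W[of zL] W[of zR] zL zR by (simp add: W_def)
qed

lemma winding_number_boundary_inside_outside:
  assumes sp: "simple_polygon p d"
  obtains \<sigma> where "\<sigma> = 1 \<or> \<sigma> = -1"
    "\<And>z. z \<in> inside (bdry p d) \<Longrightarrow> winding_number (boundary_path p d) z = \<sigma>"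
    "\<And>z. z \<in> outside (bdry p d) \<Longrightarrow> winding_number (boundary_path p d) z = 0"
proof -
  note bp = simple_closed_boundary_path[OF sp]
  have "\<And>z. z \<in> outside (bdry p d) \<Longrightarrow> winding_number (boundary_path p d) z = 0"
    using winding_number_zero_in_outside[OF simple_path_imp_path[OF bp(1)] bp(2)] bp(3) by simp
  then show ?thesis
    using simple_closed_path_winding_number_inside[OF bp(1)] that[of 1] that[of "-1"] bp(3) by metis
qed

lemma winding_number_boundary_constant:
  assumes "simple_polygon p d" "connected S" "S \<inter> bdry p d = {}"
  obtains w where "\<And>z. z \<in> S \<Longrightarrow> winding_number (boundary_path p d) z = w"
proof -
  note bp = simple_closed_boundary_path[OF assms(1)]
  have "winding_number (boundary_path p d) constant_on S"
    using assms bp by (intro winding_number_constant) (auto simp: simple_path_imp_path)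
  then show ?thesis using that unfolding constant_on_def by blast
qed

text \<open>Since the boundary separates inside (winding number \<open>\<sigma>\<close>) from outside (winding number \<open>0\<close>)
  and every side is a common frontier, the two winding numbers near a side are \<open>\<sigma>\<close> and \<open>0\<close>;
  the jump across the side decides which one lies on the left.\<close>
lemma winding_number_near_side:
  assumes sp: "simple_polygon p d" and il: "i < d" and y: "y \<in> open_side p d i"
    and \<sigma>: "\<sigma> = 1 \<or> \<sigma> = -1"
    and ins: "\<And>z. z \<in> inside (bdry p d) \<Longrightarrow> winding_number (boundary_path p d) z = \<sigma>"
    and out: "\<And>z. z \<in> outside (bdry p d) \<Longrightarrow> winding_number (boundary_path p d) z = 0"
  obtains r where "0 < r"
    "\<And>z. z \<in> ball y r \<Longrightarrow> side_cross p d i z > 0 \<Longrightarrow>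
       z \<notin> bdry p d \<and> winding_number (boundary_path p d) z = (if \<sigma> = 1 then 1 else 0)"
    "\<And>z. z \<in> ball y r \<Longrightarrow> side_cross p d i z < 0 \<Longrightarrow>
       z \<notin> bdry p d \<and> winding_number (boundary_path p d) z = (if \<sigma> = 1 then 0 else -1)"
proof -
  define W where "W = winding_number (boundary_path p d)"
  obtain r where r: "0 < r"
    and away: "\<And>z k. z \<in> ball y r \<Longrightarrow> k < d \<Longrightarrow> k \<noteq> i \<Longrightarrow> z \<notin> sseg p d k"
    using open_side_isolated[OF sp il y] by blast
  define HL where "HL = ball y r \<inter> {z. side_cross p d i z > 0}"
  define HR where "HR = ball y r \<inter> {z. side_cross p d i z < 0}"
  have nb: "z \<notin> bdry p d" if "z \<in> HL \<union> HR" for z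
    using off_side_notin_bdry[of d i z] away that unfolding HL_def HR_def by fastforce
  have "connected HL" "connected HR" unfolding HL_def HR_def
    by (intro convex_connected convex_Int convex_ball convex_side_cross_pos convex_side_cross_neg)+
  moreover have "HL \<inter> bdry p d = {}" "HR \<inter> bdry p d = {}" using nb by blast+
  ultimately obtain WL WR where WL: "\<And>z. z \<in> HL \<Longrightarrow> W z = WL"
    and WR: "\<And>z. z \<in> HR \<Longrightarrow> W z = WR"
    using winding_number_boundary_constant[OF sp] unfolding W_def by metis
  obtain zL zR where z: "zL \<in> HL" "zR \<in> HR" "Re (W zL) - Re (W zR) > -1"
    using winding_number_jump_across_side[OF sp il y r away] unfolding W_def HL_def HR_def by blast
  have jump: "Re WL - Re WR > -1" using z WL WR by simp
  have J: "open (inside (bdry p d))" "frontier (inside (bdry p d)) = bdry p d"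
      "open (outside (bdry p d))" "frontier (outside (bdry p d)) = bdry p d"
      "inside (bdry p d) \<union> outside (bdry p d) = - bdry p d"
    using Jordan_inside_outside[OF simple_closed_boundary_path(1,2)[OF sp]] simple_closed_boundary_path(3)[OF sp] by simp_all
  have vals: "W z = \<sigma> \<or> W z = 0" if "z \<in> HL \<union> HR" for z
    using J(5) nb[OF that] ins out unfolding W_def by blast
  obtain zi where "zi \<in> inside (bdry p d)" "zi \<in> HL \<union> HR"
    using open_frontier_bdry_meets_off_side[OF sp il y r J(1,2)]
    unfolding HL_def HR_def by (metis IntI Un_iff linorder_neqE_linordered_idom mem_Collect_eq)
  moreover obtain zo where "zo \<in> outside (bdry p d)" "zo \<in> HL \<union> HR"
    using open_frontier_bdry_meets_off_side[OF sp il y r J(3,4)]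
    unfolding HL_def HR_def by (metis IntI Un_iff linorder_neqE_linordered_idom mem_Collect_eq)
  ultimately have "WL \<noteq> WR" using ins out WL WR \<sigma> unfolding W_def by fastforce
  then have "WL = (if \<sigma> = 1 then 1 else 0) \<and> WR = (if \<sigma> = 1 then 0 else -1)"
    using vals[of zL] vals[of zR] z WL WR jump \<sigma> by auto
  then show ?thesis
    using that[OF r] nb WL WR unfolding HL_def HR_def W_def by auto
qed

section \<open>The reflected direction points inward\<close>

lemma ray_not_parallel_to_hit_side:
  assumes sp: "simple_polygon p d" and jl: "j < d"
    and hit: "x + of_real t * v \<in> open_side p d j" and t: "0 < t"
    and free: "\<And>t'. 0 < t' \<Longrightarrow> t' < t \<Longrightarrow> x + of_real t' * v \<notin> bdry p d"
  shows "Im (cnj (svec p d j) * v) \<noteq> 0"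
proof
  assume parallel: "Im (cnj (svec p d j) * v) = 0"
  define e where "e = svec p d j"
  obtain u where u: "0 < u" "u < 1" and hit_u: "x + of_real t * v = p j + of_real u * e"
    using hit unfolding open_side_def in_segment e_def svec_def
    by (auto simp: scaleR_conv_of_real algebra_simps)
  have "e \<noteq> 0" using svec_nonzero[OF sp jl] by (simp add: e_def)
  define \<kappa> where "\<kappa> = Re (cnj e * v) / (cmod e)\<^sup>2"
  have "of_real ((cmod e)\<^sup>2) * v = e * (cnj e * v)"
    by (simp only: complex_norm_square mult.assoc)
  also have "\<dots> = e * of_real (Re (cnj e * v))"
    using parallel by (simp add: e_def complex_eq_iff)
  finally have v: "v = of_real \<kappa> * e" using \<open>e \<noteq> 0\<close> by (simp add: \<kappa>_def field_simps)
  \<comment> \<open>backing off along the ray by a small \<open>\<tau>\<close> keeps the point on side \<open>j\<close>\<close>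
  define \<mu> where "\<mu> = min u (1 - u) / (2 * (\<bar>\<kappa>\<bar> + 1))"
  define \<tau> where "\<tau> = min (t / 2) \<mu>"
  have \<tau>: "0 < \<tau>" "\<tau> < t" using u t by (auto simp: \<tau>_def \<mu>_def add_pos_nonneg)
  have "\<bar>\<tau> * \<kappa>\<bar> \<le> \<mu> * \<bar>\<kappa>\<bar>"
    using \<tau> by (auto simp: abs_mult \<tau>_def intro: mult_right_mono)
  also have "\<dots> = min u (1 - u) * (\<bar>\<kappa>\<bar> / (2 * (\<bar>\<kappa>\<bar> + 1)))" by (simp add: \<mu>_def)
  also have "\<dots> < min u (1 - u) * 1"
    using u by (intro mult_strict_left_mono) (auto simp: field_simps)
  finally have "0 \<le> u - \<tau> * \<kappa>" "u - \<tau> * \<kappa> \<le> 1" by auto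
  moreover have "x + of_real (t - \<tau>) * v = (1 - (u - \<tau> * \<kappa>)) *\<^sub>R p j + (u - \<tau> * \<kappa>) *\<^sub>R p (nxt d j)"
    using hit_u unfolding v e_def svec_def by (simp add: scaleR_conv_of_real algebra_simps)
  ultimately have "x + of_real (t - \<tau>) * v \<in> sseg p d j"
    unfolding sseg_def in_segment by blast
  then show False using free[of "t - \<tau>"] \<tau> jl by (auto simp: bdry_def)
qed

lemma short_step:
  assumes "0 < t" "0 < r" "v \<noteq> 0"
  obtains \<tau> :: real where "0 < \<tau>" "\<tau> < t" "\<tau> * cmod v < r"
proof -
  define \<tau> where "\<tau> = min (t / 2) (r / (2 * cmod v))"
  have "\<tau> * cmod v \<le> r / (2 * cmod v) * cmod v"
    by (intro mult_right_mono) (auto simp: \<tau>_def)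
  also have "\<dots> < r" using assms by simp
  finally show ?thesis using that[of \<tau>] assms by (simp add: \<tau>_def)
qed

text \<open>The winding number of the boundary is constant along the chord, while it drops by one
  from the left of side \<open>i\<close> to the right of side \<open>j\<close>.\<close>
lemma chord_arrives_from_left:
  assumes sp: "simple_polygon p d" and il: "i < d" and jl: "j < d"
    and x: "x \<in> open_side p d i" and hit: "x + of_real t * v \<in> open_side p d j" and t: "0 < t"
    and free: "\<And>t'. 0 < t' \<Longrightarrow> t' < t \<Longrightarrow> x + of_real t' * v \<notin> bdry p d"
    and leaves_left: "Im (cnj (svec p d i) * v) > 0"
  shows "Im (cnj (svec p d j) * v) < 0"
proof (rule ccontr)
  assume "\<not> ?thesis"
  then have arrives_left: "Im (cnj (svec p d j) * v) > 0"
    using ray_not_parallel_to_hit_side[OF sp jl hit t free] by linarith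
  obtain \<sigma> where \<sigma>: "\<sigma> = 1 \<or> \<sigma> = -1"
    and ins: "\<And>z. z \<in> inside (bdry p d) \<Longrightarrow> winding_number (boundary_path p d) z = \<sigma>"
    and out: "\<And>z. z \<in> outside (bdry p d) \<Longrightarrow> winding_number (boundary_path p d) z = 0"
    using winding_number_boundary_inside_outside[OF sp] by blast
  define x' where "x' = x + of_real t * v"
  obtain ri where ri: "0 < ri" and left_i: "\<And>z. z \<in> ball x ri \<Longrightarrow> side_cross p d i z > 0 \<Longrightarrow>
      winding_number (boundary_path p d) z = (if \<sigma> = 1 then 1 else 0)"
    using winding_number_near_side[OF sp il x \<sigma> ins out] by metis
  obtain rj where rj: "0 < rj" and right_j: "\<And>z. z \<in> ball x' rj \<Longrightarrow> side_cross p d j z < 0 \<Longrightarrow>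
      winding_number (boundary_path p d) z = (if \<sigma> = 1 then 0 else -1)"
    using winding_number_near_side[OF sp jl hit[folded x'_def] \<sigma> ins out] by metis
  have vn: "v \<noteq> 0" using leaves_left by auto
  obtain \<tau>1 where \<tau>1: "0 < \<tau>1" "\<tau>1 < t" "\<tau>1 * cmod v < ri"
    using short_step[OF t ri vn] .
  obtain \<tau>2 where \<tau>2: "0 < \<tau>2" "\<tau>2 < t" "\<tau>2 * cmod v < rj"
    using short_step[OF t rj vn] .
  define A where "A = x + of_real \<tau>1 * v"
  define B where "B = x + of_real (t - \<tau>2) * v"
  have B': "B = x' + of_real (- \<tau>2) * v" by (simp add: B_def x'_def algebra_simps)
  have "side_cross p d i x = 0" "side_cross p d j x' = 0"
    using side_cross_sseg open_side_subset_sseg x hit x'_def by blast+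
  then have "side_cross p d i A > 0" "side_cross p d j B < 0"
    unfolding A_def B' side_cross_add Im_cnj_mult_of_real
    using \<tau>1 \<tau>2 leaves_left arrives_left by (simp_all add: mult_pos_pos)
  moreover have "A \<in> ball x ri" "B \<in> ball x' rj"
    using \<tau>1 \<tau>2 by (simp_all add: A_def B' dist_norm norm_mult)
  ultimately have neq: "winding_number (boundary_path p d) A \<noteq> winding_number (boundary_path p d) B"
    using left_i right_j \<sigma> by fastforce
  define S where "S = (\<lambda>\<tau>. x + of_real \<tau> * v) ` {0<..<t}"
  have "connected S" unfolding S_def
    by (intro connected_continuous_image continuous_intros) simp
  moreover have "S \<inter> bdry p d = {}" using free unfolding S_def by auto
  ultimately obtain w where "\<And>z. z \<in> S \<Longrightarrow> winding_number (boundary_path p d) z = w"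
    using winding_number_boundary_constant[OF sp] by metis
  moreover have "A \<in> S" unfolding S_def A_def by (rule imageI) (use \<tau>1 in simp)
  moreover have "B \<in> S" unfolding S_def B_def by (rule imageI) (use \<tau>2 in simp)
  ultimately show False using neq by simp
qed

lemma bmap_angle_bound:
  assumes sp: "simple_polygon p d" and y: "y \<in> Mdom p d"
  shows "-(pi/2) < snd (bmap p d y) \<and> snd (bmap p d y) < pi/2"
proof -
  obtain s \<theta> where y_eq: "y = (s, \<theta>)" by (cases y)
  obtain i j t where il: "i < d" and osi: "on_side p d i s" and "side_of p d s = i"
    and th: "-(pi/2) < \<theta>" "\<theta> < pi/2" and fh: "first_hit p d s \<theta> t" and jl: "j < d"
    and hit: "pos p d s + of_real t * vel p d s \<theta> \<in> open_side p d j"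
    and "on_side p d j (fst (bmap p d (s, \<theta>)))"
    and "side_of p d (fst (bmap p d (s, \<theta>))) = j"
    and "pos p d (fst (bmap p d (s, \<theta>))) = pos p d s + of_real t * vel p d s \<theta>"
    and angle: "snd (bmap p d (s, \<theta>)) = Arg ((tang p d j)\<^sup>2 * cnj (vel p d s \<theta>) / inormal p d j)"
    and vel: "vel p d s \<theta> = inormal p d i * cis \<theta>"
    by (rule Mdom_elim[OF sp y[unfolded y_eq]])
  have ti: "cmod (tang p d i) = 1" and tj: "cmod (tang p d j) = 1"
    using norm_tang[OF sp] il jl by auto
  have "cnj (svec p d i) * vel p d s \<theta>
      = of_real (slen p d i) * (tang p d i * cnj (tang p d i)) * (\<i> * cis \<theta>)"
    by (simp add: svec_eq_slen_tang[OF sp il] vel inormal_def algebra_simps)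
  then have "Im (cnj (svec p d i) * vel p d s \<theta>) = slen p d i * cos \<theta>"
    by (simp add: unit_mult_cnj[OF ti])
  moreover have "0 < cos \<theta>" using cos_gt_zero_pi th by blast
  ultimately have "Im (cnj (svec p d i) * vel p d s \<theta>) > 0" using slen_pos[OF sp il] by simp
  then have "Im (cnj (svec p d j) * vel p d s \<theta>) < 0"
    using chord_arrives_from_left[OF sp il jl pos_on_side(2)[OF sp osi] hit] fh
    unfolding first_hit_def by blast
  then have "Im (cnj (tang p d j) * vel p d s \<theta>) < 0"
    using slen_pos[OF sp jl]
    by (simp add: svec_eq_slen_tang[OF sp jl] Im_cnj_mult_of_real mult_less_0_iff)
  then have "\<bar>Arg ((tang p d j)\<^sup>2 * cnj (vel p d s \<theta>) / inormal p d j)\<bar> < pi / 2"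
    using Arg_Re_pos Re_reflection[OF tj] by (simp add: inormal_def)
  then show ?thesis using angle y_eq by auto
qed

section \<open>Time reversal\<close>

lemma first_hit_reverse:
  assumes fh: "first_hit p d s \<theta> t" and x: "pos p d s \<in> bdry p d"
    and pos': "pos p d s' = pos p d s + of_real t * vel p d s \<theta>"
    and vel': "vel p d s' \<theta>' = - vel p d s \<theta>"
  shows "first_hit p d s' \<theta>' t"
  unfolding first_hit_def
proof (intro conjI allI impI)
  show "0 < t" using fh by (simp add: first_hit_def)
  show "pos p d s' + of_real t * vel p d s' \<theta>' \<in> bdry p d" using x by (simp add: pos' vel')
  fix t' assume t': "0 < t' \<and> t' < t"
  have "pos p d s' + of_real t' * vel p d s' \<theta>' = pos p d s + of_real (t - t') * vel p d s \<theta>"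
    by (simp add: pos' vel' algebra_simps)
  moreover have "0 < t - t' \<and> t - t' < t" using t' by auto
  ultimately show "pos p d s' + of_real t' * vel p d s' \<theta>' \<notin> bdry p d"
    using fh unfolding first_hit_def by metis
qed

lemma bmap_time_reversal:
  assumes sp: "simple_polygon p d" and y: "y \<in> Mdom p d"
  shows "Srev (bmap p d y) \<in> Mdom p d" and "bmap p d (Srev (bmap p d y)) = Srev y"
proof -
  obtain s \<theta> where y_eq: "y = (s, \<theta>)" by (cases y)
  obtain i j t where il: "i < d" and osi: "on_side p d i s" and sid: "side_of p d s = i"
    and th: "-(pi/2) < \<theta>" "\<theta> < pi/2" and fh: "first_hit p d s \<theta> t" and jl: "j < d"
    and "pos p d s + of_real t * vel p d s \<theta> \<in> open_side p d j"
    and osj: "on_side p d j (fst (bmap p d (s, \<theta>)))"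
    and sidj: "side_of p d (fst (bmap p d (s, \<theta>))) = j"
    and posj: "pos p d (fst (bmap p d (s, \<theta>))) = pos p d s + of_real t * vel p d s \<theta>"
    and angle: "snd (bmap p d (s, \<theta>)) = Arg ((tang p d j)\<^sup>2 * cnj (vel p d s \<theta>) / inormal p d j)"
    and vel: "vel p d s \<theta> = inormal p d i * cis \<theta>"
    by (rule Mdom_elim[OF sp y[unfolded y_eq]])
  obtain s' \<theta>' where bm: "bmap p d (s, \<theta>) = (s', \<theta>')" by (cases "bmap p d (s, \<theta>)")
  define v where "v = vel p d s \<theta>"
  define w where "w = (tang p d j)\<^sup>2 * cnj v / inormal p d j"
  have ti: "cmod (tang p d i) = 1" and tj: "cmod (tang p d j) = 1"
    using norm_tang[OF sp] il jl by auto
  have "cmod w = 1"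
    using norm_reflection[OF tj, of v] ti by (simp add: w_def v_def vel inormal_def norm_mult)
  then have vel': "vel p d s' (- \<theta>') = - v"
    using bm y_eq sidj angle cis_minus_Arg reflection_twice[OF tj, of v]
    by (simp add: vel_def w_def v_def inormal_def)
  have x: "pos p d s \<in> open_side p d i" using pos_on_side(2)[OF sp osi] .
  have fh': "first_hit p d s' (- \<theta>') t"
    using first_hit_reverse[OF fh] open_side_subset_bdry[OF il] x posj vel' bm y_eq
    by (auto simp: v_def)
  have "hit_pt p d s' (- \<theta>') \<notin> p ` {..<d}"
    using hit_pt_eq[OF fh'] posj vel' bm y_eq vertex_notin_open_side[OF sp il] x
    by (auto simp: v_def)
  moreover have "-(pi/2) < \<theta>'" "\<theta>' < pi/2" using bmap_angle_bound[OF sp y] bm y_eq by auto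
  ultimately show "Srev (bmap p d y) \<in> Mdom p d"
    using fh' osj bm y_eq by (auto simp: Mdom_def Srev_def regular_s_def)
  have "hit_pt p d s' (- \<theta>') = pos p d s"
    using hit_pt_eq[OF fh'] posj vel' bm y_eq by (simp add: v_def)
  then have "bmap p d (s', - \<theta>') = (s, Arg ((tang p d i)\<^sup>2 * cnj (- v) / inormal p d i))"
    by (simp add: bmap_def Let_def arc_of_pos[OF sp osi] sid vel')
  also have "Arg ((tang p d i)\<^sup>2 * cnj (- v) / inormal p d i) = - \<theta>"
    using Arg_reflection_reverse[OF ti th] by (simp add: v_def vel inormal_def)
  finally show "bmap p d (Srev (bmap p d y)) = Srev y" by (simp add: bm y_eq Srev_def)
qed

section \<open>Reversing pinball orbits\<close>

lemma Srev_Srev [simp]: "Srev (Srev y) = y"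
  by (cases y) (simp add: Srev_def)

lemma fst_Srev [simp]: "fst (Srev y) = fst y"
  by (cases y) (simp add: Srev_def)

lemma fst_Rlam [simp]: "fst (Rlam l y) = fst y"
  by (cases y) (simp add: Rlam_def)

lemma Srev_Rlam: "Srev (Rlam l y) = Rlam l (Srev y)"
  by (cases y) (simp add: Rlam_def Srev_def)

lemma Rlam_inverse: "l \<noteq> 0 \<Longrightarrow> Rlam (1 / l) (Rlam l y) = y"
  by (cases y) (simp add: Rlam_def)

lemma Rlam_1 [simp]: "Rlam 1 y = y"
  by (cases y) (simp add: Rlam_def)

lemma pinball_1 [simp]: "pinball p d 1 = bmap p d"
  by (simp add: pinball_def fun_eq_iff)

lemma periodic_add_mult:
  fixes f :: "nat \<Rightarrow> 'a"
  assumes "\<And>k. f (k + N) = f k"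
  shows "f (k + N * c) = f k"
proof (induction c)
  case (Suc c)
  then show ?case using assms[of "k + N * c"] by (simp add: ac_simps)
qed simp

lemma funpow_add_period: "(g ^^ N) x = x \<Longrightarrow> (g ^^ (k + N)) x = (g ^^ k) x"
  by (simp add: funpow_add)

text \<open>Both indices are congruent to \<open>-m\<close> modulo the respective period.\<close>
lemma periodic_reflected_index:
  fixes f :: "nat \<Rightarrow> 'a"
  assumes N: "\<And>k. f (k + N) = f k" "0 < N" and M: "\<And>k. f (k + M) = f k" "0 < M"
  shows "f ((N - 1) * (m + 1) + 1) = f ((M - 1) * (m + 1) + 1)"
proof -
  have "(N - 1) * (m + 1) + 1 + N * ((m + 1) * (M - 1))
      = (M - 1) * (m + 1) + 1 + M * ((m + 1) * (N - 1))"
  proof -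
    obtain N' M' where "N = Suc N'" "M = Suc M'" using N(2) M(2) not0_implies_Suc by blast
    then show ?thesis by (simp add: algebra_simps)
  qed
  then show ?thesis
    using periodic_add_mult[of f N, OF N(1)] periodic_add_mult[of f M, OF M(1)] by metis
qed

text \<open>If \<open>X\<^sub>k\<close> is an orbit of \<open>\<Phi>\<^sub>l\<close> of period \<open>N\<close>, the orbit of \<open>\<Phi>\<^bsub>1/l\<^esub>\<close> starting from
  \<open>R\<^bsub>1/l\<^esub> (S x)\<close> is \<open>m \<mapsto> S (\<Phi> X\<^bsub>-(m+1)\<^esub>)\<close>, by the time reversal symmetry of \<open>\<Phi>\<close>.\<close>
lemma pinball_time_reversal:
  assumes sp: "simple_polygon p d" and l: "0 < l"
    and orbit: "\<And>k. (pinball p d l ^^ k) x \<in> Mdom p d"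
    and N: "0 < N" "(pinball p d l ^^ N) x = x"
  shows "periodic_orbit p d (pinball p d (1/l)) (Rlam (1/l) (Srev x))"
    and "itinerary p d (pinball p d (1/l)) (Rlam (1/l) (Srev x)) m
           = itinerary p d (pinball p d l) x ((N - 1) * (m + 1) + 1)"
proof -
  define X where "X k = (pinball p d l ^^ k) x" for k
  define T where "T y = Srev (bmap p d y)" for y
  have X_Suc: "X (Suc k) = Rlam l (bmap p d (X k))" for k by (simp add: X_def pinball_def)
  have X_period: "X (k + N * c) = X k" for k c
    using periodic_add_mult[of X N] funpow_add_period[OF N(2)] by (simp add: X_def)
  have step: "pinball p d (1/l) (T (X (Suc k))) = T (X k)" for k
  proof -
    have "bmap p d (T (X (Suc k))) = Srev (X (Suc k))"
      using bmap_time_reversal(2)[OF sp orbit[of "Suc k"]] by (simp only: T_def X_def)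
    then have "pinball p d (1/l) (T (X (Suc k))) = Rlam (1/l) (Srev (X (Suc k)))"
      by (simp add: pinball_def)
    also have "\<dots> = T (X k)" using l by (simp add: X_Suc Srev_Rlam Rlam_inverse T_def)
    finally show ?thesis .
  qed
  obtain N' where N': "N = Suc N'" using N(1) gr0_implies_Suc by blast
  have start: "Rlam (1/l) (Srev x) = T (X N')"
  proof -
    have "x = X (Suc N')" using N N' by (simp add: X_def)
    then show ?thesis using l by (simp add: X_Suc Srev_Rlam Rlam_inverse T_def)
  qed
  have reversed: "(pinball p d (1/l) ^^ m) (Rlam (1/l) (Srev x)) = T (X (N' * (m + 1)))" for m
  proof (induction m)
    case (Suc m)
    have "Suc (N' * (Suc m + 1)) = N' * (m + 1) + N * 1" by (simp add: N')
    then have "X (Suc (N' * (Suc m + 1))) = X (N' * (m + 1))" by (metis X_period)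
    then show ?case using Suc step[of "N' * (Suc m + 1)"] by simp
  qed (simp add: start)
  have "X (N' * (N + 1)) = X N'"
    using X_period[of N' N'] by (simp add: N' algebra_simps)
  then have "(pinball p d (1/l) ^^ N) (Rlam (1/l) (Srev x)) = Rlam (1/l) (Srev x)"
    using reversed start by simp
  moreover have "T (X k) \<in> Mdom p d" for k
    using bmap_time_reversal(1)[OF sp orbit] by (simp add: T_def X_def)
  ultimately show "periodic_orbit p d (pinball p d (1/l)) (Rlam (1/l) (Srev x))"
    unfolding periodic_orbit_def using reversed N(1) by auto
  show "itinerary p d (pinball p d (1/l)) (Rlam (1/l) (Srev x)) m
      = itinerary p d (pinball p d l) x ((N - 1) * (m + 1) + 1)"
    using reversed[of m] by (simp add: itinerary_def T_def X_def N' pinball_def)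
qed

lemma itinerary_add_period:
  "(f ^^ N) x = x \<Longrightarrow> itinerary p d f x (k + N) = itinerary p d f x k"
  by (simp add: itinerary_def funpow_add_period)

lemma periodic_orbit_Srev:
  assumes "simple_polygon p d" "periodic_orbit p d (bmap p d) q"
  shows "periodic_orbit p d (bmap p d) (Srev q)"
  using assms pinball_time_reversal(1)[of p d 1 q] by (auto simp: periodic_orbit_def)

lemma reversed_pinball_orbit:
  assumes sp: "simple_polygon p d" and q: "periodic_orbit p d (bmap p d) q" and l: "0 < l"
    and x: "periodic_orbit p d (pinball p d l) x"
    and itin: "itinerary p d (pinball p d l) x = itinerary p d (bmap p d) q"
  shows "periodic_orbit p d (pinball p d (1/l)) (Rlam (1/l) (Srev x))"
    and "itinerary p d (pinball p d (1/l)) (Rlam (1/l) (Srev x)) = itinerary p d (bmap p d) (Srev q)"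
proof -
  obtain N where N: "0 < N" "(pinball p d l ^^ N) x = x"
    and orbit_x: "\<And>k. (pinball p d l ^^ k) x \<in> Mdom p d"
    using x unfolding periodic_orbit_def by blast
  obtain M where M: "0 < M" "(bmap p d ^^ M) q = q"
    and orbit_q: "\<And>k. (pinball p d 1 ^^ k) q \<in> Mdom p d"
    using q unfolding periodic_orbit_def by auto
  note reversal_x = pinball_time_reversal[OF sp l orbit_x N]
  show "periodic_orbit p d (pinball p d (1/l)) (Rlam (1/l) (Srev x))" by (rule reversal_x(1))
  have reversal_q: "itinerary p d (bmap p d) (Srev q) m
      = itinerary p d (bmap p d) q ((M - 1) * (m + 1) + 1)" for m
    using pinball_time_reversal(2)[OF sp zero_less_one orbit_q M(1)] M(2) by simp
  show "itinerary p d (pinball p d (1/l)) (Rlam (1/l) (Srev x)) = itinerary p d (bmap p d) (Srev q)"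
  proof
    fix m
    define I where "I = itinerary p d (bmap p d) q"
    have "I (k + N) = I k" for k
      using itinerary_add_period[OF N(2)] itin unfolding I_def by metis
    moreover have "I (k + M) = I k" for k
      using itinerary_add_period[OF M(2)] unfolding I_def by metis
    ultimately have "I ((N - 1) * (m + 1) + 1) = I ((M - 1) * (m + 1) + 1)"
      using periodic_reflected_index N(1) M(1) by metis
    then show "itinerary p d (pinball p d (1/l)) (Rlam (1/l) (Srev x)) m
        = itinerary p d (bmap p d) (Srev q) m"
      using reversal_x(2) reversal_q itin unfolding I_def by simp
  qed
qed

lemma tendsto_Rlam_Srev:
  assumes "lam \<longlonglongrightarrow> 1" "qs \<longlonglongrightarrow> q"
  shows "(\<lambda>n. Rlam (1 / lam n) (Srev (qs n))) \<longlonglongrightarrow> Srev q"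
proof -
  have "(\<lambda>n. (fst (qs n), (1 / lam n) * (- snd (qs n)))) \<longlonglongrightarrow> (fst q, (1 / 1) * (- snd q))"
    by (intro tendsto_intros assms) simp
  moreover have "Rlam (1 / lam n) (Srev (qs n)) = (fst (qs n), (1 / lam n) * (- snd (qs n)))" for n
    by (cases "qs n") (simp add: Rlam_def Srev_def)
  moreover have "Srev q = (fst q, (1 / 1) * (- snd q))" by (cases q) (simp add: Srev_def)
  ultimately show ?thesis by simp
qed

lemma lam_minus_stable_Srev:
  assumes sp: "simple_polygon p d" and "lam_minus_stable p d q"
  shows "lam_plus_stable p d (Srev q)"
proof -
  obtain lam qs where q: "periodic_orbit p d (bmap p d) q"
    and lam: "\<forall>n. 0 < lam n" "\<forall>n. lam n < lam (Suc n)" "lam \<longlonglongrightarrow> 1"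
    and "\<forall>n. periodic_orbit p d (pinball p d (lam n)) (qs n) \<and>
             itinerary p d (pinball p d (lam n)) (qs n) = itinerary p d (bmap p d) q"
    and "qs \<longlonglongrightarrow> q"
    using assms(2) unfolding lam_minus_stable_def by blast
  then show ?thesis
    unfolding lam_plus_stable_def
    using periodic_orbit_Srev[OF sp q] reversed_pinball_orbit[OF sp q] tendsto_Rlam_Srev
      tendsto_divide[OF tendsto_const lam(3), of 1]
    by (intro conjI exI[of _ "\<lambda>n. 1 / lam n"] exI[of _ "\<lambda>n. Rlam (1 / lam n) (Srev (qs n))"])
      (simp_all add: frac_less2)
qed

lemma lam_plus_stable_Srev:
  assumes sp: "simple_polygon p d" and "lam_plus_stable p d q"
  shows "lam_minus_stable p d (Srev q)"
proof -
  obtain lam qs where q: "periodic_orbit p d (bmap p d) q"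
    and lam: "\<forall>n. 0 < lam n" "\<forall>n. lam (Suc n) < lam n" "lam \<longlonglongrightarrow> 1"
    and "\<forall>n. periodic_orbit p d (pinball p d (lam n)) (qs n) \<and>
             itinerary p d (pinball p d (lam n)) (qs n) = itinerary p d (bmap p d) q"
    and "qs \<longlonglongrightarrow> q"
    using assms(2) unfolding lam_plus_stable_def by blast
  then show ?thesis
    unfolding lam_minus_stable_def
    using periodic_orbit_Srev[OF sp q] reversed_pinball_orbit[OF sp q] tendsto_Rlam_Srev
      tendsto_divide[OF tendsto_const lam(3), of 1]
    by (intro conjI exI[of _ "\<lambda>n. 1 / lam n"] exI[of _ "\<lambda>n. Rlam (1 / lam n) (Srev (qs n))"])
      (simp_all add: frac_less2)
qed

theorem lemma2p6:
  fixes p :: "nat \<Rightarrow> complex" and d :: nat and C :: "(real \<times> real) set"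
  assumes "simple_polygon p d" and "anticlockwise p d"
    and "periodic_cylinder p d C"
  shows "cyl_lam_minus_stable p d C \<longleftrightarrow> cyl_lam_plus_stable p d (Srev ` C)"
  unfolding cyl_lam_minus_stable_def cyl_lam_plus_stable_def
  using lam_minus_stable_Srev[OF assms(1)] lam_plus_stable_Srev[OF assms(1)]
  by (metis Srev_Srev image_iff)

end
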